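(* Let $(X,S)$ be an $S$-metric space. A sequence $\{x_n\}$ in $X$ is statistically bounded if and only if there exists a non-negative real number $r$ such that $st\text{-}LIM^r x_n\neq\emptyset$.
   Context: An $S$-metric on a nonempty set $X$ is a function $S:X^3\to[0,\infty)$ such that for all $x,y,z,a\in X$: $S(x,y,z)=0$ if and only if $x=y=z$, and $S(x,y,z)\le S(x,x,a)+S(y,y,a)+S(z,z,a)$. For $B\subset\mathbb N$ the natural density is $\delta(B)=\lim_{n\to\infty}\frac{|\{k\in B:k\le n\}|}{n}$ when the limit exists. A sequence $\{x_n\}$ is statistically bounded if for any fixed $u\in X$ there exists a positive real number $B$ such that $\delta(\{n\in\mathbb N: S(x_n,x_n,u)\ge B\})=0$. For $r\ge0$, $\{x_n\}$ is $r$-statistically convergent to $x$ if for every $\varepsilon>0$, $\delta(\{n\in\mathbb N: S(x_n,x_n,x)\ge r+\varepsilon\})=0$; $st\text{-}LIM^r x_n$ denotes the set of all such $x\in X$. *)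

theory Defs
  imports "HOL-Analysis.Analysis"
begin

definition S_metric :: "'a set \<Rightarrow> ('a \<Rightarrow> 'a \<Rightarrow> 'a \<Rightarrow> real) \<Rightarrow> bool" where
  "S_metric X S \<longleftrightarrow> X \<noteq> {} \<and>
     (\<forall>x\<in>X. \<forall>y\<in>X. \<forall>z\<in>X. S x y z \<ge> 0) \<and>
     (\<forall>x\<in>X. \<forall>y\<in>X. \<forall>z\<in>X. S x y z = 0 \<longleftrightarrow> x = y \<and> y = z) \<and>
     (\<forall>x\<in>X. \<forall>y\<in>X. \<forall>z\<in>X. \<forall>a\<in>X. S x y z \<le> S x x a + S y y a + S z z a)"

definition has_natural_density :: "nat set \<Rightarrow> real \<Rightarrow> bool" where
  "has_natural_density B d \<longleftrightarrow>
     ((\<lambda>n. real (card {k \<in> B. 1 \<le> k \<and> k \<le> n}) / real n) \<longlonglongrightarrow> d)"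

definition stat_bounded :: "'a set \<Rightarrow> ('a \<Rightarrow> 'a \<Rightarrow> 'a \<Rightarrow> real) \<Rightarrow> (nat \<Rightarrow> 'a) \<Rightarrow> bool" where
  "stat_bounded X S x \<longleftrightarrow>
     (\<forall>u\<in>X. \<exists>B::real. B > 0 \<and> has_natural_density {n. n \<ge> 1 \<and> S (x n) (x n) u \<ge> B} 0)"

definition r_stat_conv :: "'a set \<Rightarrow> ('a \<Rightarrow> 'a \<Rightarrow> 'a \<Rightarrow> real) \<Rightarrow> real \<Rightarrow> (nat \<Rightarrow> 'a) \<Rightarrow> 'a \<Rightarrow> bool" where
  "r_stat_conv X S r x l \<longleftrightarrow>
     (\<forall>\<epsilon>>0. has_natural_density {n. n \<ge> 1 \<and> S (x n) (x n) l \<ge> r + \<epsilon>} 0)"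

definition st_LIM :: "'a set \<Rightarrow> ('a \<Rightarrow> 'a \<Rightarrow> 'a \<Rightarrow> real) \<Rightarrow> real \<Rightarrow> (nat \<Rightarrow> 'a) \<Rightarrow> 'a set" where
  "st_LIM X S r x = {l \<in> X. r_stat_conv X S r x l}"

end

theory Submission
  imports Defs
begin

text \<open>
  If S(x_n,x_n,u) is statistically below B then x_n is B-statistically convergent to u, by
  monotonicity of density zero. Conversely, if x_n is r-statistically convergent to l, the
  inequality S(x,x,u) \<le> 2 S(x,x,l) + S(u,u,l) shows that S(x_n,x_n,u) is statistically
  below 2(r + 1) + S(u,u,l).
\<close>

lemma has_natural_density_zero_subset:
  assumes "A \<subseteq> B" and "has_natural_density B 0"
  shows "has_natural_density A 0"
  unfolding has_natural_density_def
proof (rule tendsto_sandwich)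
  let ?dB = "\<lambda>n. real (card {k \<in> B. 1 \<le> k \<and> k \<le> n}) / real n"
  have "card {k \<in> A. 1 \<le> k \<and> k \<le> n} \<le> card {k \<in> B. 1 \<le> k \<and> k \<le> n}" for n
    using assms(1) by (intro card_mono) (auto intro: finite_subset[of _ "{..n}"])
  then show "\<forall>\<^sub>F n in sequentially. real (card {k \<in> A. 1 \<le> k \<and> k \<le> n}) / real n \<le> ?dB n"
    by (intro always_eventually allI divide_right_mono) simp_all
  show "\<forall>\<^sub>F n in sequentially. 0 \<le> real (card {k \<in> A. 1 \<le> k \<and> k \<le> n}) / real n"
    by simp
  show "(\<lambda>n. 0) \<longlonglongrightarrow> (0::real)" by simp
  show "?dB \<longlonglongrightarrow> 0"
    using assms(2) unfolding has_natural_density_def .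
qed

lemma S_metric_le_twice_plus:
  assumes "S_metric X S" and "x \<in> X" "u \<in> X" "l \<in> X"
  shows "S x x u \<le> 2 * S x x l + S u u l"
  using assms unfolding S_metric_def by fastforce

lemma r_stat_conv_of_density_zero:
  assumes "has_natural_density {n. n \<ge> 1 \<and> S (x n) (x n) u \<ge> B} 0"
  shows "r_stat_conv X S B x u"
  unfolding r_stat_conv_def
  by (auto intro: has_natural_density_zero_subset[OF _ assms])

lemma r_stat_conv_imp_stat_bounded:
  assumes "S_metric X S" and "\<forall>n. x n \<in> X" and "l \<in> X" and "r_stat_conv X S r x l"
  shows "stat_bounded X S x"
  unfolding stat_bounded_def
proof
  fix u assume u: "u \<in> X"
  define B where "B = max 1 (2 * (r + 1) + S u u l)"
  have far: "{n. n \<ge> 1 \<and> S (x n) (x n) u \<ge> B} \<subseteq> {n. n \<ge> 1 \<and> S (x n) (x n) l \<ge> r + 1}"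
  proof (intro subsetI CollectI conjI)
    fix n assume "n \<in> {n. n \<ge> 1 \<and> S (x n) (x n) u \<ge> B}"
    moreover have "S (x n) (x n) u \<le> 2 * S (x n) (x n) l + S u u l"
      using S_metric_le_twice_plus[OF assms(1) _ u assms(3)] assms(2) by blast
    ultimately show "n \<ge> 1" "S (x n) (x n) l \<ge> r + 1"
      unfolding B_def by auto
  qed
  have "has_natural_density {n. n \<ge> 1 \<and> S (x n) (x n) l \<ge> r + 1} 0"
    using assms(4) unfolding r_stat_conv_def by simp
  with far have "has_natural_density {n. n \<ge> 1 \<and> S (x n) (x n) u \<ge> B} 0"
    by (rule has_natural_density_zero_subset)
  moreover have "B > 0" unfolding B_def by simp
  ultimately show "\<exists>B>0. has_natural_density {n. n \<ge> 1 \<and> S (x n) (x n) u \<ge> B} 0"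
    by blast
qed

theorem theorem4p6:
  fixes X :: "'a set" and S :: "'a \<Rightarrow> 'a \<Rightarrow> 'a \<Rightarrow> real" and x :: "nat \<Rightarrow> 'a"
  assumes "S_metric X S"
    and "\<forall>n. x n \<in> X"
  shows "stat_bounded X S x \<longleftrightarrow> (\<exists>r::real. r \<ge> 0 \<and> st_LIM X S r x \<noteq> {})"
proof
  assume bounded: "stat_bounded X S x"
  obtain u where u: "u \<in> X"
    using assms(1) unfolding S_metric_def by (meson ex_in_conv)
  with bounded obtain B where "B > 0" and "has_natural_density {n. n \<ge> 1 \<and> S (x n) (x n) u \<ge> B} 0"
    unfolding stat_bounded_def by blast
  then have "B \<ge> 0" and "u \<in> st_LIM X S B x"
    using u unfolding st_LIM_def by (simp_all add: r_stat_conv_of_density_zero)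
  then show "\<exists>r. r \<ge> 0 \<and> st_LIM X S r x \<noteq> {}" by blast
next
  assume "\<exists>r. r \<ge> 0 \<and> st_LIM X S r x \<noteq> {}"
  then obtain r l where "l \<in> X" "r_stat_conv X S r x l"
    unfolding st_LIM_def by blast
  with assms show "stat_bounded X S x"
    by (rule r_stat_conv_imp_stat_bounded)
qed

end
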